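(* Let $w:=3/\sqrt{2}$, and for $t\in[0,w]$ let $x:=-t+wi$ and $X:=1/x$. Define $$G_5:=X+qX^2+q^3X^3+q^6X^4+q^{10}X^5,\qquad G_*:=\sum_{j=5}^{\infty}q^{j(j+1)/2}X^{j+1}.$$ Then for all $(q,t)\in[0.6,1]\times[0,w]$ one has $|G_*|<0.0208$ and $|G_5|>0.147$.
   Context: Note $G_5+G_*=\sum_{j=-\infty}^{-1}q^{j(j+1)/2}x^j$. *)

theory Defs
  imports Complex_Main
begin

definition w_const :: real where "w_const = 3 / sqrt 2"

definition Xpt :: "real \<Rightarrow> complex" where
  "Xpt t = 1 / Complex (- t) w_const"

definition G5 :: "real \<Rightarrow> complex \<Rightarrow> complex" where
  "G5 q X = X + of_real q * X^2 + of_real (q^3) * X^3 + of_real (q^6) * X^4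
            + of_real (q^10) * X^5"

text \<open>G_* = sum over j \<ge> 5 of q^(j(j+1)/2) X^(j+1); reindexed with j = n + 5.\<close>
definition Gstar :: "real \<Rightarrow> complex \<Rightarrow> complex" where
  "Gstar q X = (\<Sum>n. of_real (q ^ (((n + 5) * (n + 6)) div 2)) * X ^ (n + 6))"

end

theory Submission
  imports Defs
begin

text \<open>
  With \<open>r = |X|\<close> one has \<open>r\<^sup>2 = 1 / (t\<^sup>2 + 9/2) \<in> [1/9, 2/9]\<close>. Since \<open>|q| \<le> 1\<close>,
  the tail \<open>G\<^sub>*\<close> is dominated by the geometric series \<open>r\<^sup>6 / (1 - r)\<close>. For \<open>G\<^sub>5\<close>, the
  leading terms combine to \<open>X + q X\<^sup>2 = X\<^sup>2 (x + q)\<close> with \<open>|x + q| \<ge> Im x = w\<close>, so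
  \<open>|G\<^sub>5| \<ge> r\<^sup>2 (w - r - r\<^sup>2 - r\<^sup>3)\<close>, which is bounded below on two subintervals of
  \<open>[1/3, 0.4715]\<close>.
\<close>

lemma w_const_pos: "0 < w_const"
  unfolding w_const_def by simp

lemma w_const_square: "w_const\<^sup>2 = 9/2"
  unfolding w_const_def by (simp add: power_divide)

lemma w_const_ge: "2.1213 \<le> w_const"
proof (rule ccontr)
  assume "\<not> ?thesis"
  then have "w_const\<^sup>2 < 2.1213\<^sup>2"
    using w_const_pos by (intro power_strict_mono) auto
  then show False
    using w_const_square by (simp add: power2_eq_square)
qed

lemma Im_inverse_Xpt [simp]: "Im (1 / Xpt t) = w_const"
  by (simp add: Xpt_def)

lemma norm_Xpt_square: "(norm (Xpt t))\<^sup>2 = 1 / (t\<^sup>2 + 9/2)"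
  by (simp add: Xpt_def norm_divide power_divide cmod_power2 w_const_square)

lemma norm_Xpt_bounds:
  assumes "\<bar>t\<bar> \<le> w_const"
  shows "(norm (Xpt t))\<^sup>2 \<le> 2/9" "1/3 \<le> norm (Xpt t)" "norm (Xpt t) \<le> 0.4715"
proof -
  show upper: "(norm (Xpt t))\<^sup>2 \<le> 2/9"
    by (simp add: norm_Xpt_square field_simps add_pos_nonneg)
  have "t\<^sup>2 \<le> 9/2"
    using power_mono[OF assms, of 2] w_const_square by simp
  then have lower: "1/9 \<le> (norm (Xpt t))\<^sup>2"
    by (simp add: norm_Xpt_square field_simps add_pos_nonneg)
  have "(1/3)\<^sup>2 \<le> (norm (Xpt t))\<^sup>2"
    using lower by (simp add: power_divide)
  then show "1/3 \<le> norm (Xpt t)"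
    by (rule power2_le_imp_le) simp
  have "(norm (Xpt t))\<^sup>2 \<le> 0.4715\<^sup>2"
    using upper by (simp add: power_divide)
  then show "norm (Xpt t) \<le> 0.4715"
    by (rule power2_le_imp_le) simp
qed

lemma norm_Gstar_le:
  fixes X :: complex
  assumes "\<bar>q\<bar> \<le> 1" "norm X < 1"
  shows "norm (Gstar q X) \<le> norm X ^ 6 / (1 - norm X)"
proof -
  define r where "r = norm X"
  define f where "f n = of_real (q ^ (((n + 5) * (n + 6)) div 2)) * X ^ (n + 6)" for n
  have f_le: "norm (f n) \<le> r ^ 6 * r ^ n" for n
  proof -
    have "norm (f n) = \<bar>q\<bar> ^ (((n + 5) * (n + 6)) div 2) * (r ^ 6 * r ^ n)"
      by (simp add: f_def r_def norm_mult norm_power power_abs power_add mult.commute)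
    also have "\<dots> \<le> r ^ 6 * r ^ n"
      using assms(1) by (intro mult_left_le_one_le power_le_one) (auto simp: r_def)
    finally show ?thesis .
  qed
  have geometric: "summable (\<lambda>n. r ^ 6 * r ^ n)"
    using assms(2) by (intro summable_mult summable_geometric) (simp add: r_def)
  have summable_norm_f: "summable (\<lambda>n. norm (f n))"
    by (rule summable_comparison_test[OF _ geometric]) (use f_le in auto)
  have "norm (Gstar q X) \<le> (\<Sum>n. norm (f n))"
    unfolding Gstar_def f_def[symmetric] by (rule summable_norm[OF summable_norm_f])
  also have "\<dots> \<le> (\<Sum>n. r ^ 6 * r ^ n)"
    by (rule suminf_le[OF f_le summable_norm_f geometric])
  also have "\<dots> = r ^ 6 / (1 - r)"
    using suminf_mult[OF summable_geometric, of r "r ^ 6"] suminf_geometric[of r] assms(2)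
    by (simp add: r_def)
  finally show ?thesis
    by (simp add: r_def)
qed

lemma norm_G5_ge:
  fixes X :: complex
  assumes "X \<noteq> 0" "\<bar>q\<bar> \<le> 1"
  shows "\<bar>Im (1 / X)\<bar> * (norm X)\<^sup>2 - norm X ^ 3 - norm X ^ 4 - norm X ^ 5 \<le> norm (G5 q X)"
proof -
  define lead where "lead = X + of_real q * X\<^sup>2"
  define tail where "tail = of_real (q^3) * X^3 + of_real (q^6) * X^4 + of_real (q^10) * X^5"
  have "lead = X\<^sup>2 * (1 / X + of_real q)"
    using assms(1) by (simp add: lead_def field_simps power2_eq_square)
  moreover have "\<bar>Im (1 / X)\<bar> \<le> norm (1 / X + of_real q)"
    using abs_Im_le_cmod[of "1 / X + of_real q"] by simp
  ultimately have lead_ge: "\<bar>Im (1 / X)\<bar> * (norm X)\<^sup>2 \<le> norm lead"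
    by (simp add: norm_mult norm_power mult.commute[of "(norm X)\<^sup>2"] mult_right_mono)
  have coeff_le: "norm (of_real (q ^ k) * X ^ m) \<le> norm X ^ m" for k m
  proof -
    have "norm (of_real (q ^ k) * X ^ m) = \<bar>q\<bar> ^ k * norm X ^ m"
      by (simp add: norm_mult norm_power power_abs)
    also have "\<dots> \<le> norm X ^ m"
      using assms(2) by (intro mult_left_le_one_le power_le_one) auto
    finally show ?thesis .
  qed
  have "norm tail \<le> norm X ^ 3 + norm X ^ 4 + norm X ^ 5"
    unfolding tail_def
    by (intro norm_triangle_le add_mono coeff_le)
  moreover have "norm lead - norm tail \<le> norm (G5 q X)"
    using norm_diff_ineq[of lead tail] by (simp add: G5_def lead_def tail_def algebra_simps)
  ultimately show ?thesis
    using lead_ge by linarith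
qed

lemma cubic_factor_mono:
  fixes a b r w :: real
  assumes "0 \<le> a" "a \<le> r" "r \<le> b" "b + b\<^sup>2 + b ^ 3 \<le> w"
  shows "a\<^sup>2 * (w - b - b\<^sup>2 - b ^ 3) \<le> r\<^sup>2 * (w - r - r\<^sup>2 - r ^ 3)"
proof (rule mult_mono)
  show "a\<^sup>2 \<le> r\<^sup>2"
    using assms by (intro power_mono) auto
  have "r\<^sup>2 \<le> b\<^sup>2" "r ^ 3 \<le> b ^ 3"
    using assms by (intro power_mono; simp)+
  then show "w - b - b\<^sup>2 - b ^ 3 \<le> w - r - r\<^sup>2 - r ^ 3"
    using assms by linarith
qed (use assms in auto)

lemma G5_lower_polynomial:
  fixes r w :: real
  assumes "1/3 \<le> r" "r \<le> 0.4715" "2.1213 \<le> w"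
  shows "0.147 < w * r\<^sup>2 - r ^ 3 - r ^ 4 - r ^ 5"
proof -
  have factor: "w * r\<^sup>2 - r ^ 3 - r ^ 4 - r ^ 5 = r\<^sup>2 * (w - r - r\<^sup>2 - r ^ 3)"
    by (simp add: algebra_simps power2_eq_square power3_eq_cube power_numeral_reduce)
  consider "r \<le> 0.36" | "0.36 \<le> r"
    by linarith
  then show ?thesis
  proof cases
    case 1
    have "(1/3)\<^sup>2 * (w - 0.36 - 0.36\<^sup>2 - 0.36 ^ 3) \<le> r\<^sup>2 * (w - r - r\<^sup>2 - r ^ 3)"
      using 1 assms by (intro cubic_factor_mono) (auto simp: power2_eq_square power3_eq_cube)
    then show ?thesis
      using assms(3) factor by (simp add: power2_eq_square power3_eq_cube)
  next
    case 2
    have "0.36\<^sup>2 * (w - 0.4715 - 0.4715\<^sup>2 - 0.4715 ^ 3) \<le> r\<^sup>2 * (w - r - r\<^sup>2 - r ^ 3)"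
      using 2 assms by (intro cubic_factor_mono) (auto simp: power2_eq_square power3_eq_cube)
    then show ?thesis
      using assms(3) factor by (simp add: power2_eq_square power3_eq_cube)
  qed
qed

theorem lemma2:
  fixes q t :: real
  assumes "0.6 \<le> q" "q \<le> 1" "0 \<le> t" "t \<le> w_const"
  shows "cmod (Gstar q (Xpt t)) < 0.0208 \<and> cmod (G5 q (Xpt t)) > 0.147"
proof
  define r where "r = cmod (Xpt t)"
  have q: "\<bar>q\<bar> \<le> 1" and t: "\<bar>t\<bar> \<le> w_const"
    using assms by auto
  note r_bounds = norm_Xpt_bounds[OF t, folded r_def]
  have "r ^ 6 \<le> (2/9) ^ 3"
    using r_bounds(1) power_mono[of "r\<^sup>2" "2/9" 3] by (simp add: power_mult[symmetric])
  then have "r ^ 6 / (1 - r) < 0.0208"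
    using r_bounds(3) by (simp add: divide_simps power3_eq_cube)
  moreover have "cmod (Gstar q (Xpt t)) \<le> r ^ 6 / (1 - r)"
    using norm_Gstar_le[OF q, of "Xpt t"] r_bounds(3) by (simp add: r_def)
  ultimately show "cmod (Gstar q (Xpt t)) < 0.0208"
    by linarith
  have "Xpt t \<noteq> 0"
    using r_bounds(2) by (auto simp: r_def)
  then show "cmod (G5 q (Xpt t)) > 0.147"
    using norm_G5_ge[OF _ q] G5_lower_polynomial[OF r_bounds(2,3) w_const_ge] w_const_pos
    by (fastforce simp: r_def)
qed

end
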